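(* Let $q$ be a prime power and let $n,k$ be integers with $5\le k$ and $k\le n-2\le q-2$. Let $\alpha_1,\dots,\alpha_n\in\mathbb{F}_q$ be pairwise distinct, let $G_{k-1,k-2}$ be the $k\times n$ matrix whose rows are $(\alpha_1^{e},\dots,\alpha_n^{e})$ for $e=0,1,\dots,k-3,k,k+1$, let $\mathbf{v}=(v_1,\dots,v_n)\in(\mathbb{F}_q^* )^n$, and let $C_{\mathbf v}$ be the linear code generated by $G_{k-1,k-2}\cdot\mathrm{diag}(v_1,\dots,v_n)$. Let $u_i=\prod_{j\ne i}(\alpha_i-\alpha_j)^{-1}$ for $1\le i\le n$ and $S_t=S_t(\alpha_1,\dots,\alpha_n)$. Then $C_{\mathbf v}$ is self-orthogonal if and only if there exists a polynomial $f(x)=f_0+f_1x+\dots+f_{n-2k}x^{n-2k}\in\mathbb{F}_q[x]$ such that (1) $v_i^2=u_if(\alpha_i)$ for all $1\le i\le n$; (2) $f_{n-2k-1}+f_{n-2k}S_1=0$; (3) $f_{n-2k-2}+f_{n-2k-1}S_1+f_{n-2k}S_2=0$; (4) $f_{n-2k-3}+f_{n-2k-2}S_1+f_{n-2k-1}S_2+f_{n-2k}S_3=0$, where $f_j=0$ for $j<0$.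
   Context: Convention: $0^0=1$. $S_t(x_1,\dots,x_m)=\sum_{t_1+\dots+t_m=t,\ t_i\ge0}x_1^{t_1}\cdots x_m^{t_m}$ is the complete homogeneous symmetric polynomial of degree $t$ ($S_0=1$). A linear code $C$ is self-orthogonal if $C\subseteq C^\perp$, where $C^\perp$ is the dual with respect to the Euclidean inner product $\langle x,y\rangle=\sum_i x_iy_i$. *)

theory Defs
  imports "HOL-Computational_Algebra.Polynomial" "HOL-Library.FuncSet" "HOL-Library.Cardinality"
begin

text \<open>Vectors of length n over a field are functions nat => 'a, coordinates 0..n-1,
  required to vanish outside {0..<n}.\<close>

definition row_span :: "nat \<Rightarrow> nat \<Rightarrow> (nat \<Rightarrow> nat \<Rightarrow> 'a::field) \<Rightarrow> (nat \<Rightarrow> 'a) set" where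
  "row_span m n G = {c. \<exists>l :: nat \<Rightarrow> 'a. c = (\<lambda>i. if i < n then (\<Sum>r<m. l r * G r i) else 0)}"

definition dual_code :: "nat \<Rightarrow> (nat \<Rightarrow> 'a::field) set \<Rightarrow> (nat \<Rightarrow> 'a) set" where
  "dual_code n C = {y. (\<forall>i\<ge>n. y i = 0) \<and> (\<forall>c\<in>C. (\<Sum>i<n. c i * y i) = 0)}"

definition self_orthogonal :: "nat \<Rightarrow> (nat \<Rightarrow> 'a::field) set \<Rightarrow> bool" where
  "self_orthogonal n C \<longleftrightarrow> C \<subseteq> dual_code n C"

definition gen_exp :: "nat \<Rightarrow> nat \<Rightarrow> nat" where
  "gen_exp k r = (if r < k - 2 then r else r + 2)"

definition gen_mat :: "nat \<Rightarrow> (nat \<Rightarrow> 'a::field) \<Rightarrow> (nat \<Rightarrow> 'a) \<Rightarrow> nat \<Rightarrow> nat \<Rightarrow> 'a" where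
  "gen_mat k \<alpha> v r i = \<alpha> i ^ gen_exp k r * v i"

definition hsym :: "nat \<Rightarrow> (nat \<Rightarrow> 'a::comm_semiring_1) \<Rightarrow> nat \<Rightarrow> 'a" where
  "hsym n \<alpha> t = (\<Sum>ts\<in>{ts \<in> {0..<n} \<rightarrow>\<^sub>E {..t}. (\<Sum>i<n. ts i) = t}. \<Prod>i<n. \<alpha> i ^ ts i)"

definition u_coef :: "nat \<Rightarrow> (nat \<Rightarrow> 'a::field) \<Rightarrow> nat \<Rightarrow> 'a" where
  "u_coef n \<alpha> i = (\<Prod>j\<in>{0..<n} - {i}. inverse (\<alpha> i - \<alpha> j))"

definition icoeff :: "'a::zero poly \<Rightarrow> int \<Rightarrow> 'a" where
  "icoeff f j = (if j < 0 then 0 else coeff f (nat j))"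

end

theory Submission
  imports Defs
begin

text \<open>Self-orthogonality means \<open>\<Sum>i<n. v i ^ 2 * \<alpha> i ^ m = 0\<close> for every sum \<open>m\<close> of two of the
  exponents \<open>0, \<dots>, k - 3, k, k + 1\<close>, i.e. for \<open>m \<le> 2k - 2\<close> and \<open>m = 2k, 2k + 1, 2k + 2\<close>.
  Lagrange interpolation gives \<open>v i ^ 2 = u i * f (\<alpha> i)\<close> with \<open>deg f < n\<close>, which turns the sum
  into \<open>\<Sum>j. f\<^sub>j * (\<Sum>i<n. u i * \<alpha> i ^ (j + m))\<close>. The inner sum is the divided difference of
  \<open>x ^ (j + m)\<close> at the nodes: \<open>0\<close> for \<open>j + m < n - 1\<close> and \<open>S (j + m - n + 1)\<close> otherwise. So the sums for
  \<open>m \<le> 2k - 2\<close> vanish iff \<open>deg f \<le> n - 2k\<close> (the first sum that does not vanish is the leading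
  coefficient of \<open>f\<close>), and the three remaining sums are the left-hand sides of (2)--(4).\<close>

lemma hsym_no_vars: "hsym 0 \<alpha> t = (if t = 0 then 1 else 0)"
  by (simp add: hsym_def PiE_empty_domain)

lemma hsym_Suc:
  "hsym (Suc n) \<alpha> t = (\<Sum>s\<le>t. \<alpha> n ^ s * hsym n \<alpha> (t - s))"
proof -
  define A :: "nat \<Rightarrow> nat \<Rightarrow> (nat \<Rightarrow> nat) set"
    where "A m u = {ts \<in> {0..<m} \<rightarrow>\<^sub>E {..u}. (\<Sum>i<m. ts i) = u}" for m u
  have "hsym (Suc n) \<alpha> t = (\<Sum>ts\<in>A (Suc n) t. \<Prod>i<Suc n. \<alpha> i ^ ts i)"
    by (simp add: hsym_def A_def)
  also have "\<dots> = (\<Sum>(s, g)\<in>(SIGMA s:{..t}. A n (t - s)). \<Prod>i<Suc n. \<alpha> i ^ (g(n := s)) i)"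
  proof (rule sum.reindex_bij_witness[where i = "\<lambda>(s, g). g(n := s)" and j = "\<lambda>ts. (ts n, ts(n := undefined))"])
    fix ts assume ts: "ts \<in> A (Suc n) t"
    then have le: "ts i \<le> t - ts n" if "i < n" for i
      using member_le_sum[of i "{..<n}" ts] that by (auto simp: A_def)
    show "(ts n, ts(n := undefined)) \<in> (SIGMA s:{..t}. A n (t - s))"
      using ts le by (auto simp: A_def PiE_iff extensional_def)
  next
    fix sg assume "sg \<in> (SIGMA s:{..t}. A n (t - s))"
    then show "(case sg of (s, g) \<Rightarrow> g(n := s)) \<in> A (Suc n) t"
      by (force simp: A_def PiE_iff extensional_def less_Suc_eq split: prod.splits)
  next
    fix sg assume "sg \<in> (SIGMA s:{..t}. A n (t - s))"
    then show "(\<lambda>ts. (ts n, ts(n := undefined))) (case sg of (s, g) \<Rightarrow> g(n := s)) = sg"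
      by (auto simp: A_def PiE_iff extensional_def fun_eq_iff split: prod.splits)
  qed (auto simp: A_def)
  also have "\<dots> = (\<Sum>s\<le>t. \<Sum>g\<in>A n (t - s). \<alpha> n ^ s * (\<Prod>i<n. \<alpha> i ^ g i))"
    by (subst sum.Sigma) (auto simp: A_def finite_PiE mult.commute intro!: sum.cong)
  also have "\<dots> = (\<Sum>s\<le>t. \<alpha> n ^ s * hsym n \<alpha> (t - s))"
    by (simp add: hsym_def A_def sum_distrib_left)
  finally show ?thesis .
qed

lemma hsym_degree_0 [simp]: "hsym n \<alpha> 0 = 1"
  by (induction n) (simp_all add: hsym_no_vars hsym_Suc)

lemma hsym_Suc_Suc: "hsym (Suc n) \<alpha> (Suc t) = hsym n \<alpha> (Suc t) + \<alpha> n * hsym (Suc n) \<alpha> t"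
  by (simp only: hsym_Suc sum.atMost_Suc_shift) (simp add: sum_distrib_left mult.assoc)

lemma hsym_one_var: "hsym (Suc 0) \<alpha> t = \<alpha> 0 ^ t"
  by (induction t) (simp_all add: hsym_Suc_Suc hsym_no_vars)

definition divdiff_power :: "(nat \<Rightarrow> 'a::field) \<Rightarrow> nat set \<Rightarrow> nat \<Rightarrow> 'a" where
  "divdiff_power \<alpha> B m = (\<Sum>i\<in>B. \<alpha> i ^ m * (\<Prod>j\<in>B - {i}. inverse (\<alpha> i - \<alpha> j)))"

lemma divdiff_power_Suc:
  assumes "finite B" and "inj_on \<alpha> B" and "a \<in> B"
  shows "divdiff_power \<alpha> B (Suc m) = \<alpha> a * divdiff_power \<alpha> B m + divdiff_power \<alpha> (B - {a}) m"
proof -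
  let ?w = "\<lambda>B i. \<Prod>j\<in>B - {i}. inverse (\<alpha> i - \<alpha> j)"
  have remove_a: "(\<alpha> i - \<alpha> a) * ?w B i = ?w (B - {a}) i" if i: "i \<in> B - {a}" for i
  proof -
    have "B - {i} = insert a (B - {a} - {i})" using i assms(3) by auto
    moreover have "\<alpha> i \<noteq> \<alpha> a" using i assms(2,3) by (auto dest: inj_onD)
    ultimately show ?thesis using assms(1) by simp
  qed
  have "divdiff_power \<alpha> B (Suc m) - \<alpha> a * divdiff_power \<alpha> B m
      = (\<Sum>i\<in>B. \<alpha> i ^ m * ((\<alpha> i - \<alpha> a) * ?w B i))"
    unfolding divdiff_power_def by (simp add: sum_distrib_left sum_subtractf[symmetric] algebra_simps)
  also have "\<dots> = (\<Sum>i\<in>B - {a}. \<alpha> i ^ m * ((\<alpha> i - \<alpha> a) * ?w B i))"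
    using assms by (intro sum.mono_neutral_right) auto
  also have "\<dots> = divdiff_power \<alpha> (B - {a}) m"
    unfolding divdiff_power_def by (intro sum.cong) (simp_all add: remove_a)
  finally show ?thesis by (simp add: algebra_simps)
qed

lemma divdiff_power_below:
  assumes "finite B" and "inj_on \<alpha> B" and "card B = Suc n" and "m \<le> n"
  shows "divdiff_power \<alpha> B m = (if m = n then 1 else 0)"
  using assms
proof (induction n arbitrary: B m)
  case 0
  then obtain a where "B = {a}" by (auto simp: card_Suc_eq)
  then show ?case using 0 by (simp add: divdiff_power_def)
next
  case (Suc n)
  obtain a b where ab: "a \<in> B" "b \<in> B" "a \<noteq> b"
    using Suc.prems(3) by (metis card_Suc_eq insert_iff)
  have IH: "divdiff_power \<alpha> (B - {c}) m = (if m = n then 1 else 0)" if "c \<in> B" "m \<le> n" for c m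
    using Suc.IH[of "B - {c}" m] Suc.prems that by (simp add: inj_on_diff)
  have rec: "divdiff_power \<alpha> B (Suc m) = \<alpha> c * divdiff_power \<alpha> B m + divdiff_power \<alpha> (B - {c}) m"
    if "c \<in> B" for c m
    using divdiff_power_Suc Suc.prems(1,2) that by blast
  \<comment> \<open>Both sides equal \<open>divdiff_power \<alpha> B 1\<close>; as \<open>\<alpha> a \<noteq> \<alpha> b\<close> this forces \<open>divdiff_power \<alpha> B 0 = 0\<close>.\<close>
  have "\<alpha> a * divdiff_power \<alpha> B 0 + divdiff_power \<alpha> (B - {a}) 0
      = \<alpha> b * divdiff_power \<alpha> B 0 + divdiff_power \<alpha> (B - {b}) 0"
    using rec[OF ab(1)] rec[OF ab(2)] by metis
  then have "(\<alpha> a - \<alpha> b) * divdiff_power \<alpha> B 0 = 0"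
    using IH ab by (simp add: algebra_simps)
  moreover have "\<alpha> a \<noteq> \<alpha> b" using ab Suc.prems(2) by (auto dest: inj_onD)
  ultimately have zero: "divdiff_power \<alpha> B 0 = 0" by simp
  have "divdiff_power \<alpha> B m = (if m = Suc n then 1 else 0)" if "m \<le> Suc n" for m
    using that
  proof (induction m)
    case (Suc m)
    then show ?case using rec[OF ab(1), of m] IH[OF ab(1), of m] by simp
  qed (simp add: zero)
  then show ?case using Suc.prems(4) .
qed

lemma divdiff_power_hsym:
  assumes "inj_on \<alpha> {0..<Suc n}"
  shows "divdiff_power \<alpha> {0..<Suc n} (n + t) = hsym (Suc n) \<alpha> t"
  using assms
proof (induction n arbitrary: t)
  case 0
  then show ?case by (simp add: divdiff_power_def hsym_one_var)
next
  case (Suc n)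
  note inj = Suc.prems
  have "inj_on \<alpha> {0..<Suc n}" using inj by (rule inj_on_subset) auto
  then have IH: "divdiff_power \<alpha> {0..<Suc n} (n + t) = hsym (Suc n) \<alpha> t" for t
    using Suc.IH by blast
  show ?case
  proof (induction t)
    case 0
    show ?case using divdiff_power_below[OF _ inj, of "Suc n" "Suc n"] by simp
  next
    case (Suc t)
    have "{0..<Suc (Suc n)} - {Suc n} = {0..<Suc n}" by auto
    then show ?case
      using divdiff_power_Suc[OF _ inj, of "Suc n" "Suc n + t"] Suc.IH IH[of "Suc t"]
      by (simp add: hsym_Suc_Suc[of "Suc n"] algebra_simps)
  qed
qed

lemma u_coef_power_sum:
  assumes "inj_on \<alpha> {0..<n}" and "0 < n"
  shows "(\<Sum>i<n. u_coef n \<alpha> i * \<alpha> i ^ m) = (if m < n - 1 then 0 else hsym n \<alpha> (m - (n - 1)))"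
proof -
  obtain n' where n: "n = Suc n'" using assms(2) by (cases n) auto
  have "(\<Sum>i<n. u_coef n \<alpha> i * \<alpha> i ^ m) = divdiff_power \<alpha> {0..<n} m"
    by (simp add: divdiff_power_def u_coef_def atLeast0LessThan mult.commute)
  then show ?thesis
    using divdiff_power_below[of "{0..<n}" \<alpha> n' m] divdiff_power_hsym[of \<alpha> n' "m - n'"] assms n
    by (cases "m < n'") auto
qed

lemma u_coef_poly_power_sum:
  fixes f :: "'a::field poly"
  assumes "inj_on \<alpha> {0..<n}" and "0 < n" and "degree f \<le> N"
  shows "(\<Sum>i<n. u_coef n \<alpha> i * poly f (\<alpha> i) * \<alpha> i ^ m)
       = (\<Sum>j\<le>N. coeff f j * (if j + m < n - 1 then 0 else hsym n \<alpha> (j + m - (n - 1))))"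
proof -
  have "poly f x = (\<Sum>j\<le>N. coeff f j * x ^ j)" for x
    by (subst poly_as_sum_of_monoms'[OF assms(3), symmetric]) (simp add: poly_sum poly_monom)
  then have "(\<Sum>i<n. u_coef n \<alpha> i * poly f (\<alpha> i) * \<alpha> i ^ m)
      = (\<Sum>j\<le>N. coeff f j * (\<Sum>i<n. u_coef n \<alpha> i * \<alpha> i ^ (j + m)))"
    by (simp add: sum_distrib_left sum_distrib_right power_add ac_simps sum.swap[of _ "{..N}"])
  then show ?thesis by (simp add: u_coef_power_sum[OF assms(1,2)])
qed

lemma u_coef_poly_power_sum_low:
  fixes f :: "'a::field poly"
  assumes "inj_on \<alpha> {0..<n}" and "degree f + m < n - 1"
  shows "(\<Sum>i<n. u_coef n \<alpha> i * poly f (\<alpha> i) * \<alpha> i ^ m) = 0"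
  using u_coef_poly_power_sum[OF assms(1) _ order_refl, of f m] assms(2) by simp

lemma u_coef_poly_power_sum_lead:
  fixes f :: "'a::field poly"
  assumes "inj_on \<alpha> {0..<n}" and "degree f < n"
  shows "(\<Sum>i<n. u_coef n \<alpha> i * poly f (\<alpha> i) * \<alpha> i ^ (n - 1 - degree f)) = lead_coeff f"
proof -
  have n: "0 < n" using assms(2) by simp
  have "(\<Sum>i<n. u_coef n \<alpha> i * poly f (\<alpha> i) * \<alpha> i ^ (n - 1 - degree f))
      = (\<Sum>j\<le>degree f. if j = degree f then coeff f j else 0)"
    unfolding u_coef_poly_power_sum[OF assms(1) n order_refl] using assms(2)
    by (intro sum.cong refl) auto
  then show ?thesis by simp
qed

lemma u_coef_poly_power_sum_high:
  fixes f :: "'a::field poly"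
  assumes "inj_on \<alpha> {0..<n}" and "degree f \<le> N" and "N < n"
  shows "(\<Sum>i<n. u_coef n \<alpha> i * poly f (\<alpha> i) * \<alpha> i ^ (n - 1 - N + d))
       = (\<Sum>t\<le>d. icoeff f (int N - int d + int t) * hsym n \<alpha> t)"
proof -
  have n: "0 < n" using assms(3) by simp
  have "(\<Sum>i<n. u_coef n \<alpha> i * poly f (\<alpha> i) * \<alpha> i ^ (n - 1 - N + d))
      = (\<Sum>j\<le>N. \<Sum>t\<le>d. if j + d = N + t then coeff f j * hsym n \<alpha> t else 0)"
  proof -
    have "{..d} \<inter> {t. j + d = N + t} = (if j + d < N then {} else {j + d - N})" if "j \<le> N" for j
      using that by auto
    then show ?thesis
      unfolding u_coef_poly_power_sum[OF assms(1) n assms(2)] using assms(3)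
      by (intro sum.cong refl) (auto simp: sum.If_cases)
  qed
  also have "\<dots> = (\<Sum>t\<le>d. \<Sum>j\<le>N. if j + d = N + t then coeff f j * hsym n \<alpha> t else 0)"
    by (rule sum.swap)
  also have "\<dots> = (\<Sum>t\<le>d. icoeff f (int N - int d + int t) * hsym n \<alpha> t)"
  proof -
    have "{..N} \<inter> {j. j + d = N + t} = (if N + t < d then {} else {N + t - d})" if "t \<le> d" for t
      using that by auto
    moreover have "nat (int N - int d + int t) = N + t - d" for t
      by linarith
    ultimately show ?thesis by (intro sum.cong refl) (auto simp: sum.If_cases icoeff_def)
  qed
  finally show ?thesis .
qed

lemma u_coef_interpolation:
  fixes \<alpha> w :: "nat \<Rightarrow> 'a::field"
  assumes "inj_on \<alpha> {0..<n}" and "0 < n"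
  obtains g where "degree g < n" and "\<forall>i<n. u_coef n \<alpha> i * poly g (\<alpha> i) = w i"
proof
  define g where "g = (\<Sum>i<n. smult (w i) (\<Prod>j\<in>{0..<n} - {i}. [:- \<alpha> j, 1:]))"
  have "degree (\<Prod>j\<in>{0..<n} - {i}. [:- \<alpha> j, 1:]) < n" if "i < n" for i :: nat
    using degree_prod_sum_le[of "{0..<n} - {i}" "\<lambda>j. [:- \<alpha> j, 1:]"] that by (simp add: o_def)
  then show "degree g < n"
    unfolding g_def using assms(2) by (intro degree_sum_less) (auto intro: le_less_trans[OF degree_smult_le])
  show "\<forall>l<n. u_coef n \<alpha> l * poly g (\<alpha> l) = w l"
  proof (intro allI impI)
    fix l assume l: "l < n"
    have "poly g (\<alpha> l) = (\<Sum>i<n. if i = l then w l * (\<Prod>j\<in>{0..<n} - {l}. \<alpha> l - \<alpha> j) else 0)"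
      unfolding g_def poly_sum using l by (intro sum.cong refl) (auto simp: poly_prod)
    moreover have "u_coef n \<alpha> l * (\<Prod>j\<in>{0..<n} - {l}. \<alpha> l - \<alpha> j) = 1"
      using assms(1) l by (auto simp: u_coef_def prod.distrib[symmetric] inj_on_eq_iff intro: prod.neutral)
    ultimately show "u_coef n \<alpha> l * poly g (\<alpha> l) = w l"
      using l by (simp add: ac_simps)
  qed
qed

lemma self_orthogonal_row_span_iff:
  fixes G :: "nat \<Rightarrow> nat \<Rightarrow> 'a::field"
  shows "self_orthogonal n (row_span k n G) \<longleftrightarrow> (\<forall>r<k. \<forall>s<k. (\<Sum>i<n. G r i * G s i) = 0)"
proof
  assume so: "self_orthogonal n (row_span k n G)"
  have row: "(\<lambda>i. if i < n then G r i else 0) \<in> row_span k n G" if "r < k" for r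
  proof -
    have unit: "(\<Sum>r'<k. (if r' = r then 1 else 0) * G r' i) = G r i" for i
      using that by (simp add: if_distrib[of "\<lambda>x. x * _"] sum.delta' cong: if_cong)
    show ?thesis
      unfolding row_span_def by (intro CollectI exI[of _ "\<lambda>r'. if r' = r then 1 else 0"]) (simp only: unit)
  qed
  show "\<forall>r<k. \<forall>s<k. (\<Sum>i<n. G r i * G s i) = 0"
    using so row unfolding self_orthogonal_def dual_code_def by fastforce
next
  assume orth: "\<forall>r<k. \<forall>s<k. (\<Sum>i<n. G r i * G s i) = 0"
  have "(\<Sum>i<n. (\<Sum>r<k. l r * G r i) * (\<Sum>s<k. l' s * G s i)) = 0" for l l'
  proof -
    have "(\<Sum>i<n. (\<Sum>r<k. l r * G r i) * (\<Sum>s<k. l' s * G s i))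
        = (\<Sum>r<k. \<Sum>s<k. l r * l' s * (\<Sum>i<n. G r i * G s i))"
      by (simp add: sum_product sum_distrib_left algebra_simps sum.swap[of _ "{..<n}"])
    then show ?thesis using orth by simp
  qed
  then show "self_orthogonal n (row_span k n G)"
    unfolding self_orthogonal_def dual_code_def row_span_def by auto
qed

lemma gen_exp_pair_sums:
  assumes "5 \<le> k"
  shows "{gen_exp k r + gen_exp k s |r s. r < k \<and> s < k} = {..2*k-2} \<union> {2*k, 2*k+1, 2*k+2}"
proof (intro equalityI subsetI)
  fix m assume "m \<in> {gen_exp k r + gen_exp k s |r s. r < k \<and> s < k}"
  then show "m \<in> {..2*k-2} \<union> {2*k, 2*k+1, 2*k+2}"
    unfolding gen_exp_def by (auto split: if_splits)
next
  fix m assume m: "m \<in> {..2*k-2} \<union> {2*k, 2*k+1, 2*k+2}"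
  have "\<exists>r<k. \<exists>s<k. m = gen_exp k r + gen_exp k s"
  proof -
    consider "m < k" | "k \<le> m" "m \<le> 2*k-3" | "m = 2*k-2" | "m \<in> {2*k, 2*k+1, 2*k+2}"
      using m by force
    then show ?thesis
    proof cases
      case 1
      then have "min m (k-3) < k" "m - min m (k-3) < k"
        "m = gen_exp k (min m (k-3)) + gen_exp k (m - min m (k-3))"
        using assms by (auto simp: gen_exp_def)
      then show ?thesis by blast
    next
      case 2
      then have "k-2 < k" "m - k < k" "m = gen_exp k (k-2) + gen_exp k (m - k)"
        using assms by (auto simp: gen_exp_def)
      then show ?thesis by blast
    next
      case 3
      then have "k-1 < k" "k-3 < k" "m = gen_exp k (k-1) + gen_exp k (k-3)"
        using assms by (auto simp: gen_exp_def)
      then show ?thesis by blast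
    next
      case 4
      then have "k-2 < k" "k-1 < k" "m = gen_exp k (k-2) + gen_exp k (k-2) \<or>
          m = gen_exp k (k-2) + gen_exp k (k-1) \<or> m = gen_exp k (k-1) + gen_exp k (k-1)"
        using assms by (auto simp: gen_exp_def)
      then show ?thesis by blast
    qed
  qed
  then show "m \<in> {gen_exp k r + gen_exp k s |r s. r < k \<and> s < k}" by blast
qed

lemma coeff_eq_0_above_iff:
  fixes f :: "'a::zero poly" and b :: int
  assumes "f \<noteq> 0"
  shows "(\<forall>j. int j > b \<longrightarrow> coeff f j = 0) \<longleftrightarrow> int (degree f) \<le> b"
proof
  assume "\<forall>j. int j > b \<longrightarrow> coeff f j = 0"
  then show "int (degree f) \<le> b" using assms by (metis leading_coeff_0_iff not_le)
qed (auto intro: coeff_eq_0)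

lemma u_coef_poly_low_power_sums_vanish_iff:
  fixes f :: "'a::field poly"
  assumes "inj_on \<alpha> {0..<n}" and "1 \<le> k" and "f \<noteq> 0" and "degree f < n"
  shows "(\<forall>m\<le>2*k-2. (\<Sum>i<n. u_coef n \<alpha> i * poly f (\<alpha> i) * \<alpha> i ^ m) = 0) \<longleftrightarrow> degree f + 2*k \<le> n"
proof
  assume "\<forall>m\<le>2*k-2. (\<Sum>i<n. u_coef n \<alpha> i * poly f (\<alpha> i) * \<alpha> i ^ m) = 0"
  moreover have "lead_coeff f \<noteq> 0" using assms(3) by simp
  ultimately have "\<not> n - 1 - degree f \<le> 2*k-2"
    using u_coef_poly_power_sum_lead[OF assms(1,4)] by metis
  then show "degree f + 2*k \<le> n" by linarith
qed (use u_coef_poly_power_sum_low[OF assms(1)] assms(2) in auto)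

lemma poly_conditions_iff_u_coef_power_sums:
  fixes \<alpha> :: "nat \<Rightarrow> 'a::field" and f :: "'a poly"
  assumes inj: "inj_on \<alpha> {0..<n}" and k: "1 \<le> k" and "f \<noteq> 0" and "degree f < n"
  shows "((\<forall>j. int j > int n - 2 * int k \<longrightarrow> coeff f j = 0) \<and>
          (let N = int n - 2 * int k in
             icoeff f (N - 1) + icoeff f N * hsym n \<alpha> 1 = 0 \<and>
             icoeff f (N - 2) + icoeff f (N - 1) * hsym n \<alpha> 1 + icoeff f N * hsym n \<alpha> 2 = 0 \<and>
             icoeff f (N - 3) + icoeff f (N - 2) * hsym n \<alpha> 1 + icoeff f (N - 1) * hsym n \<alpha> 2
               + icoeff f N * hsym n \<alpha> 3 = 0))
     \<longleftrightarrow> (\<forall>m \<in> {..2*k-2} \<union> {2*k, 2*k+1, 2*k+2}. (\<Sum>i<n. u_coef n \<alpha> i * poly f (\<alpha> i) * \<alpha> i ^ m) = 0)"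
proof -
  have degree: "(\<forall>j. int j > int n - 2 * int k \<longrightarrow> coeff f j = 0) \<longleftrightarrow> degree f + 2*k \<le> n"
    unfolding coeff_eq_0_above_iff[OF assms(3)] by linarith
  have high: "(\<Sum>i<n. u_coef n \<alpha> i * poly f (\<alpha> i) * \<alpha> i ^ (2*k + d))
      = (\<Sum>t\<le>Suc d. icoeff f (int n - 2 * int k - int (Suc d) + int t) * hsym n \<alpha> t)"
    if "degree f + 2*k \<le> n" for d
    using u_coef_poly_power_sum_high[OF inj, of f "n - 2*k" "Suc d"] that k by (simp add: of_nat_diff)
  show ?thesis
    using degree u_coef_poly_low_power_sums_vanish_iff[OF assms] high[of 0] high[of 1] high[of 2]
    by (auto simp: Let_def numeral_2_eq_2 numeral_3_eq_3 algebra_simps)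
qed

lemma power_sums_vanish_iff_poly:
  fixes \<alpha> w :: "nat \<Rightarrow> 'a::field"
  assumes inj: "inj_on \<alpha> {0..<n}" and k: "1 \<le> k" and w: "\<exists>i<n. w i \<noteq> 0"
  shows "(\<forall>m \<in> {..2*k-2} \<union> {2*k, 2*k+1, 2*k+2}. (\<Sum>i<n. w i * \<alpha> i ^ m) = 0) \<longleftrightarrow>
    (\<exists>f :: 'a poly.
       (\<forall>j. int j > int n - 2 * int k \<longrightarrow> coeff f j = 0) \<and>
       (\<forall>i<n. w i = u_coef n \<alpha> i * poly f (\<alpha> i)) \<and>
       (let N = int n - 2 * int k in
          icoeff f (N - 1) + icoeff f N * hsym n \<alpha> 1 = 0 \<and>
          icoeff f (N - 2) + icoeff f (N - 1) * hsym n \<alpha> 1 + icoeff f N * hsym n \<alpha> 2 = 0 \<and>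
          icoeff f (N - 3) + icoeff f (N - 2) * hsym n \<alpha> 1 + icoeff f (N - 1) * hsym n \<alpha> 2
            + icoeff f N * hsym n \<alpha> 3 = 0))"
  (is "?moments \<longleftrightarrow> (\<exists>f. ?coeffs f \<and> ?interpolates f \<and> ?relations f)")
proof -
  have moments: "?moments \<longleftrightarrow> (\<forall>m \<in> {..2*k-2} \<union> {2*k, 2*k+1, 2*k+2}.
      (\<Sum>i<n. u_coef n \<alpha> i * poly f (\<alpha> i) * \<alpha> i ^ m) = 0)" if "?interpolates f" for f
    using that by simp
  have nonzero: "f \<noteq> 0" if "?interpolates f" for f
    using that w by auto
  show ?thesis
  proof
    assume ?moments
    obtain g where g: "degree g < n" "\<forall>i<n. u_coef n \<alpha> i * poly g (\<alpha> i) = w i"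
      using u_coef_interpolation[OF inj] w by (metis gr_zeroI not_less_zero)
    then have "?interpolates g" by simp
    with \<open>degree g < n\<close> \<open>?moments\<close> have "?coeffs g \<and> ?relations g"
      using poly_conditions_iff_u_coef_power_sums[OF inj k nonzero] moments by blast
    with \<open>?interpolates g\<close> show "\<exists>f. ?coeffs f \<and> ?interpolates f \<and> ?relations f" by blast
  next
    assume "\<exists>f. ?coeffs f \<and> ?interpolates f \<and> ?relations f"
    then obtain f where f: "?coeffs f" "?interpolates f" "?relations f" by blast
    then have "int (degree f) \<le> int n - 2 * int k"
      using coeff_eq_0_above_iff[OF nonzero] by blast
    then have "degree f < n" using k by linarith
    then show ?moments
      using f poly_conditions_iff_u_coef_power_sums[OF inj k nonzero[OF f(2)]] moments[OF f(2)] by blast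
  qed
qed

theorem theorem3p13:
  fixes \<alpha> v :: "nat \<Rightarrow> 'a::{field,finite}" and n k :: nat
  assumes "5 \<le> k" and "k \<le> n - 2" and "n - 2 \<le> CARD('a) - 2"
    and "inj_on \<alpha> {0..<n}"
    and "\<forall>i<n. v i \<noteq> 0"
  shows "self_orthogonal n (row_span k n (gen_mat k \<alpha> v)) \<longleftrightarrow>
    (\<exists>f :: 'a poly.
       (\<forall>j. int j > int n - 2 * int k \<longrightarrow> coeff f j = 0) \<and>
       (\<forall>i<n. v i ^ 2 = u_coef n \<alpha> i * poly f (\<alpha> i)) \<and>
       (let N = int n - 2 * int k in
          icoeff f (N - 1) + icoeff f N * hsym n \<alpha> 1 = 0 \<and>
          icoeff f (N - 2) + icoeff f (N - 1) * hsym n \<alpha> 1 + icoeff f N * hsym n \<alpha> 2 = 0 \<and>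
          icoeff f (N - 3) + icoeff f (N - 2) * hsym n \<alpha> 1 + icoeff f (N - 1) * hsym n \<alpha> 2
            + icoeff f N * hsym n \<alpha> 3 = 0))"
proof -
  \<comment> \<open>\<open>n - 2 \<le> CARD('a) - 2\<close> only makes room for \<open>n\<close> distinct nodes.\<close>
  define w where "w i = v i ^ 2" for i
  have k: "1 \<le> k" using assms(1) by simp
  have w: "\<exists>i<n. w i \<noteq> 0" using assms(1,2,5) by (auto simp: w_def intro: exI[of _ 0])
  have "self_orthogonal n (row_span k n (gen_mat k \<alpha> v))
      \<longleftrightarrow> (\<forall>r<k. \<forall>s<k. (\<Sum>i<n. w i * \<alpha> i ^ (gen_exp k r + gen_exp k s)) = 0)"
    by (simp add: self_orthogonal_row_span_iff gen_mat_def w_def power_add power2_eq_square ac_simps)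
  also have "\<dots> \<longleftrightarrow> (\<forall>m \<in> {..2*k-2} \<union> {2*k, 2*k+1, 2*k+2}. (\<Sum>i<n. w i * \<alpha> i ^ m) = 0)"
    unfolding gen_exp_pair_sums[OF assms(1), symmetric] by blast
  also note power_sums_vanish_iff_poly[OF assms(4) k w]
  finally show ?thesis by (simp add: w_def)
qed

end
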